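(* If $\mathcal F=(A,X,f)$ and $\mathcal G=(B,X,g)$ are complete D2-directable fuzzy automata, then their direct product $\mathcal F\times\mathcal G$ is D2-directable.
   Context: A fuzzy automaton is a triple $\mathcal F=(A,X,f)$ with $A$ a finite nonempty set of states, $X$ a finite nonempty alphabet, and $f:A\times X\times A\to[0,1]$, extended to words by $f^*(a,\varepsilon,a)=1$, $f^*(a,\varepsilon,b)=0$ ($b\neq a$), $f^*(a,vx,b)=\max_{c\in A}\min\{f^*(a,v,c),f(c,x,b)\}$. Let $\mathcal F(a,w)=\{b\in A\mid f^*(a,w,b)>0\}$. $\mathcal F$ is complete if $\mathcal F(a,x)\neq\emptyset$ for all $a\in A$, $x\in X$. $\mathcal F$ is D2-directable if there is $w\in X^*$ with $\mathcal F(a,w)=\mathcal F(b,w)$ for all $a,b\in A$. The direct product is $\mathcal F\times\mathcal G=(A\times B,X,h)$ with $h((a,b),x,(a',b'))=\min\{f(a,x,a'),g(b,x,b')\}$. *)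

theory Defs
  imports Main "HOL-Library.Product_Plus" Complex_Main
begin

definition fuzzy_automaton :: "'a set \<Rightarrow> 'x set \<Rightarrow> ('a \<Rightarrow> 'x \<Rightarrow> 'a \<Rightarrow> real) \<Rightarrow> bool" where
  "fuzzy_automaton A X f \<longleftrightarrow> finite A \<and> A \<noteq> {} \<and> finite X \<and> X \<noteq> {} \<and>
     (\<forall>a\<in>A. \<forall>x\<in>X. \<forall>b\<in>A. 0 \<le> f a x b \<and> f a x b \<le> 1)"

fun fstar_rev :: "'a set \<Rightarrow> ('a \<Rightarrow> 'x \<Rightarrow> 'a \<Rightarrow> real) \<Rightarrow> 'a \<Rightarrow> 'x list \<Rightarrow> 'a \<Rightarrow> real" where
  "fstar_rev A f a [] b = (if a = b then 1 else 0)"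
| "fstar_rev A f a (x # rv) b = Max ((\<lambda>c. min (fstar_rev A f a rv c) (f c x b)) ` A)"

definition fstar :: "'a set \<Rightarrow> ('a \<Rightarrow> 'x \<Rightarrow> 'a \<Rightarrow> real) \<Rightarrow> 'a \<Rightarrow> 'x list \<Rightarrow> 'a \<Rightarrow> real" where
  "fstar A f a w b = fstar_rev A f a (rev w) b"

lemma fstar_Nil: "fstar A f a [] b = (if a = b then 1 else 0)"
  by (simp add: fstar_def)

lemma fstar_snoc:
  "fstar A f a (v @ [x]) b = Max ((\<lambda>c. min (fstar A f a v c) (f c x b)) ` A)"
  by (simp add: fstar_def)

definition reach :: "'a set \<Rightarrow> ('a \<Rightarrow> 'x \<Rightarrow> 'a \<Rightarrow> real) \<Rightarrow> 'a \<Rightarrow> 'x list \<Rightarrow> 'a set" where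
  "reach A f a w = {b \<in> A. fstar A f a w b > 0}"

definition complete_fa :: "'a set \<Rightarrow> 'x set \<Rightarrow> ('a \<Rightarrow> 'x \<Rightarrow> 'a \<Rightarrow> real) \<Rightarrow> bool" where
  "complete_fa A X f \<longleftrightarrow> (\<forall>a\<in>A. \<forall>x\<in>X. reach A f a [x] \<noteq> {})"

definition D2_directable :: "'a set \<Rightarrow> 'x set \<Rightarrow> ('a \<Rightarrow> 'x \<Rightarrow> 'a \<Rightarrow> real) \<Rightarrow> bool" where
  "D2_directable A X f \<longleftrightarrow>
     (\<exists>w. set w \<subseteq> X \<and> (\<forall>a\<in>A. \<forall>b\<in>A. reach A f a w = reach A f b w))"

definition prod_fa :: "('a \<Rightarrow> 'x \<Rightarrow> 'a \<Rightarrow> real) \<Rightarrow> ('b \<Rightarrow> 'x \<Rightarrow> 'b \<Rightarrow> real) \<Rightarrow>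
    ('a \<times> 'b \<Rightarrow> 'x \<Rightarrow> 'a \<times> 'b \<Rightarrow> real)" where
  "prod_fa f g = (\<lambda>(a, b) x (a', b'). min (f a x a') (g b x b'))"

end

theory Submission
  imports Defs
begin

text \<open>Let \<open>u\<close> direct \<open>\<F>\<close> and \<open>v\<close> direct \<open>\<G>\<close>; then \<open>uv\<close> directs both, and hence their
  product, because the states reachable in \<open>\<F> \<times> \<G>\<close> by a word are exactly the pairs of
  states reachable in the factors. Appending any word to a directing word keeps it
  directing, since the set reached by \<open>uz\<close> depends only on the set reached by \<open>u\<close>.
  Prepending a word \<open>u\<close> to a directing word \<open>v\<close> keeps it directing in a complete automaton:
  the set reached by \<open>uv\<close> is the union of the sets reached by \<open>v\<close> from the states reached
  by \<open>u\<close>, all of which coincide, and completeness makes this union nonempty.\<close>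

definition directing_word :: "'a set \<Rightarrow> ('a \<Rightarrow> 'x \<Rightarrow> 'a \<Rightarrow> real) \<Rightarrow> 'x list \<Rightarrow> bool" where
  "directing_word A f w \<longleftrightarrow> (\<forall>a\<in>A. \<forall>b\<in>A. reach A f a w = reach A f b w)"

lemma D2_directable_iff_directing_word:
  "D2_directable A X f \<longleftrightarrow> (\<exists>w. set w \<subseteq> X \<and> directing_word A f w)"
  unfolding D2_directable_def directing_word_def ..

lemma fstar_snoc_pos_iff:
  assumes "finite A" "A \<noteq> {}"
  shows "fstar A f a (w @ [x]) b > 0 \<longleftrightarrow> (\<exists>c\<in>A. fstar A f a w c > 0 \<and> f c x b > 0)"
  using assms by (simp add: fstar_snoc Max_gr_iff)

lemma reach_subset: "reach A f a w \<subseteq> A"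
  unfolding reach_def by auto

lemma reach_Nil: "reach A f a [] = (if a \<in> A then {a} else {})"
  unfolding reach_def by (auto simp: fstar_Nil)

lemma reach_snoc:
  assumes "finite A" "A \<noteq> {}"
  shows "reach A f a (w @ [x]) = {b\<in>A. \<exists>c\<in>reach A f a w. f c x b > 0}"
  unfolding reach_def by (auto simp: fstar_snoc_pos_iff[OF assms])

lemma reach_append:
  assumes "finite A" "A \<noteq> {}"
  shows "reach A f a (u @ v) = (\<Union>c\<in>reach A f a u. reach A f c v)"
proof (induction v rule: rev_induct)
  case Nil
  then show ?case using reach_subset[of A f a u] by (auto simp: reach_Nil)
next
  case (snoc x v)
  have "reach A f a (u @ v @ [x]) = {b\<in>A. \<exists>c\<in>reach A f a (u @ v). f c x b > 0}"
    using reach_snoc[OF assms, of f a "u @ v" x] by simp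
  also have "\<dots> = (\<Union>c\<in>reach A f a u. reach A f c (v @ [x]))"
    using snoc by (auto simp: reach_snoc[OF assms])
  finally show ?case .
qed

lemma reach_nonempty:
  assumes "finite A" "A \<noteq> {}" "complete_fa A X f" "a \<in> A" "set w \<subseteq> X"
  shows "reach A f a w \<noteq> {}"
  using assms(5)
proof (induction w rule: rev_induct)
  case Nil
  then show ?case using assms(4) by (simp add: reach_Nil)
next
  case (snoc x w)
  then have "reach A f a w \<noteq> {}" and "x \<in> X" by auto
  then obtain c where c: "c \<in> reach A f a w" by blast
  then have "c \<in> A" using reach_subset[of A f a w] by blast
  have "reach A f c ([] @ [x]) \<noteq> {}"
    using assms(3) \<open>c \<in> A\<close> \<open>x \<in> X\<close> unfolding complete_fa_def by simp
  then obtain b where "b \<in> A" "f c x b > 0"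
    unfolding reach_snoc[OF assms(1,2)] reach_Nil using \<open>c \<in> A\<close> by auto
  then have "b \<in> reach A f a (w @ [x])"
    unfolding reach_snoc[OF assms(1,2)] using c by blast
  then show ?case by blast
qed

lemma directing_word_append_right:
  assumes "finite A" "A \<noteq> {}" "directing_word A f u"
  shows "directing_word A f (u @ z)"
  using assms(3) unfolding directing_word_def reach_append[OF assms(1,2)] by metis

lemma directing_word_append_left:
  assumes "finite A" "A \<noteq> {}" "complete_fa A X f" "set u \<subseteq> X" "directing_word A f v"
  shows "directing_word A f (u @ v)"
proof -
  have "reach A f a (u @ v) = reach A f b v" if "a \<in> A" "b \<in> A" for a b
  proof -
    have "reach A f a u \<noteq> {}"
      using reach_nonempty[OF assms(1-3) \<open>a \<in> A\<close> assms(4)] .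
    moreover have "reach A f c v = reach A f b v" if "c \<in> reach A f a u" for c
      using assms(5) \<open>b \<in> A\<close> that reach_subset[of A f a u]
      unfolding directing_word_def by blast
    ultimately show ?thesis by (simp add: reach_append[OF assms(1,2)])
  qed
  then show ?thesis unfolding directing_word_def by metis
qed

lemma fstar_prod_fa_pos_iff:
  assumes "finite A" "A \<noteq> {}" "finite B" "B \<noteq> {}"
  shows "fstar (A \<times> B) (prod_fa f g) (a, b) w (a', b') > 0 \<longleftrightarrow>
         fstar A f a w a' > 0 \<and> fstar B g b w b' > 0"
proof (induction w arbitrary: a' b' rule: rev_induct)
  case Nil
  then show ?case by (auto simp: fstar_Nil)
next
  case (snoc x w)
  have AB: "finite (A \<times> B)" "A \<times> B \<noteq> {}" using assms by auto
  show ?case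
  proof
    assume "fstar (A \<times> B) (prod_fa f g) (a, b) (w @ [x]) (a', b') > 0"
    then obtain c d where "(c, d) \<in> A \<times> B" "fstar (A \<times> B) (prod_fa f g) (a, b) w (c, d) > 0"
        "prod_fa f g (c, d) x (a', b') > 0"
      unfolding fstar_snoc_pos_iff[OF AB] by auto
    then show "fstar A f a (w @ [x]) a' > 0 \<and> fstar B g b (w @ [x]) b' > 0"
      unfolding fstar_snoc_pos_iff[OF assms(1,2)] fstar_snoc_pos_iff[OF assms(3,4)]
      using snoc.IH by (auto simp: prod_fa_def)
  next
    assume "fstar A f a (w @ [x]) a' > 0 \<and> fstar B g b (w @ [x]) b' > 0"
    then obtain c d where "c \<in> A" "fstar A f a w c > 0" "f c x a' > 0"
        "d \<in> B" "fstar B g b w d > 0" "g d x b' > 0"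
      unfolding fstar_snoc_pos_iff[OF assms(1,2)] fstar_snoc_pos_iff[OF assms(3,4)] by blast
    then show "fstar (A \<times> B) (prod_fa f g) (a, b) (w @ [x]) (a', b') > 0"
      unfolding fstar_snoc_pos_iff[OF AB] using snoc.IH[of c d]
      by (intro bexI[of _ "(c, d)"]) (auto simp: prod_fa_def)
  qed
qed

lemma reach_prod_fa:
  assumes "finite A" "A \<noteq> {}" "finite B" "B \<noteq> {}"
  shows "reach (A \<times> B) (prod_fa f g) (a, b) w = reach A f a w \<times> reach B g b w"
  unfolding reach_def by (auto simp: fstar_prod_fa_pos_iff[OF assms])

lemma directing_word_prod_fa:
  assumes "finite A" "A \<noteq> {}" "finite B" "B \<noteq> {}"
    and "directing_word A f w" "directing_word B g w"
  shows "directing_word (A \<times> B) (prod_fa f g) w"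
  unfolding directing_word_def
proof (intro ballI)
  fix p q assume "p \<in> A \<times> B" "q \<in> A \<times> B"
  then obtain a b a' b' where pq: "p = (a, b)" "q = (a', b')"
    and "a \<in> A" "a' \<in> A" "b \<in> B" "b' \<in> B" by auto
  then have "reach A f a w = reach A f a' w" "reach B g b w = reach B g b' w"
    using assms(5,6) unfolding directing_word_def by blast+
  then show "reach (A \<times> B) (prod_fa f g) p w = reach (A \<times> B) (prod_fa f g) q w"
    unfolding pq reach_prod_fa[OF assms(1-4)] by simp
qed

theorem proposition6p8:
  fixes A :: "'a set" and B :: "'b set" and X :: "'x set"
    and f :: "'a \<Rightarrow> 'x \<Rightarrow> 'a \<Rightarrow> real" and g :: "'b \<Rightarrow> 'x \<Rightarrow> 'b \<Rightarrow> real"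
  assumes "fuzzy_automaton A X f" and "fuzzy_automaton B X g"
    and "complete_fa A X f" and "complete_fa B X g"
    and "D2_directable A X f" and "D2_directable B X g"
  shows "D2_directable (A \<times> B) X (prod_fa f g)"
proof -
  have A: "finite A" "A \<noteq> {}" and B: "finite B" "B \<noteq> {}"
    using assms(1,2) unfolding fuzzy_automaton_def by auto
  obtain u where u: "set u \<subseteq> X" "directing_word A f u"
    using assms(5) unfolding D2_directable_iff_directing_word by blast
  obtain v where v: "set v \<subseteq> X" "directing_word B g v"
    using assms(6) unfolding D2_directable_iff_directing_word by blast
  have "directing_word A f (u @ v)"
    using directing_word_append_right[OF A u(2)] .
  moreover have "directing_word B g (u @ v)"
    using directing_word_append_left[OF B assms(4) u(1) v(2)] .
  ultimately have "directing_word (A \<times> B) (prod_fa f g) (u @ v)"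
    using directing_word_prod_fa[OF A B] by blast
  then show ?thesis
    unfolding D2_directable_iff_directing_word using u(1) v(1) by (intro exI[of _ "u @ v"]) simp
qed

end
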